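(* Let $(\omega_n)_{n}$ be i.i.d. random variables whose common law has support $[0,1]$, and for $E\in\mathbb{R}$ let $$T_n=\begin{pmatrix}(\omega_n-E)(\omega_n+E)+1&\omega_n-E\\\omega_n+E&1\end{pmatrix}\in SL_2(\mathbb{R}).$$ Let $G$ be the closed subgroup of $SL_2(\mathbb{R})$ generated by the support of the common law of the $T_n$. If $E\in[-3,3]$, then $G$ is not compact and, for every direction $\tilde{x}$ in the projective line $\mathbb{P}(\mathbb{R}^2)$, the orbit $\{g\tilde{x}:g\in G\}$ has at least three elements. *)

theory Defs
  imports "HOL-Probability.Probability"
begin

definition measure_support :: "'a::topological_space measure \<Rightarrow> 'a set" where
  "measure_support M = {x. \<forall>U. open U \<longrightarrow> x \<in> U \<longrightarrow> emeasure M U > 0}"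

definition SL2 :: "(real^2^2) set" where
  "SL2 = {A. det A = 1}"

definition closed_subgroup_generated :: "(real^2^2) set \<Rightarrow> (real^2^2) set" where
  "closed_subgroup_generated S =
     \<Inter>{H. H \<subseteq> SL2 \<and> S \<subseteq> H \<and> closed H \<and> mat 1 \<in> H \<and>
          (\<forall>A\<in>H. \<forall>B\<in>H. A ** B \<in> H) \<and> (\<forall>A\<in>H. matrix_inv A \<in> H)}"

definition transfer :: "real \<Rightarrow> real \<Rightarrow> real^2^2" where
  "transfer E w = (\<chi> i j.
     if i = 1 \<and> j = 1 then (w - E) * (w + E) + 1
     else if i = 1 \<and> j = 2 then w - E
     else if i = 2 \<and> j = 1 then w + E
     else 1)"

definition proj_point :: "real^2 \<Rightarrow> (real^2) set" where
  "proj_point x = span {x}"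

end

theory Submission
  imports Defs
begin

text \<open>
  For \<open>v, w \<in> [0,1]\<close> the quotient \<open>T(v)\<^sup>-\<^sup>1 T(w)\<close> of two transfer matrices lies in \<open>G\<close>,
  has determinant 1 and trace \<open>2 + (w - v)\<^sup>2\<close>, independently of \<open>E\<close>. A hyperbolic element (trace \<open>> 2\<close>) has powers of unbounded
  trace, hence \<open>G\<close> is unbounded. Moreover \<open>T(0)\<^sup>-\<^sup>1 T(1/2)\<close> and \<open>T(1/2)\<^sup>-\<^sup>1 T(1)\<close> have no
  common invariant line, so some \<open>k \<in> G\<close> moves the line of \<open>x\<close>; by Cayley-Hamilton,
  \<open>k\<^sup>2 = tr k \<cdot> k - 1\<close>, and as \<open>tr k \<noteq> 0\<close> the lines of \<open>x\<close>, \<open>k x\<close> and \<open>k\<^sup>2 x\<close> are distinct.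
\<close>

lemma matrix_matrix_mult_2:
  "((A::'a::comm_semiring_1^2^2) ** B) $ i $ j = A$i$1 * B$1$j + A$i$2 * B$2$j"
  by (simp add: matrix_matrix_mult_def sum_2)

lemma matrix_vector_mult_2: "((A::'a::comm_semiring_1^2^2) *v x) $ i = A$i$1 * x$1 + A$i$2 * x$2"
  by (simp add: matrix_vector_mult_def sum_2)

lemma trace_2: "trace (A::'a::comm_semiring_1^2^2) = A$1$1 + A$2$2"
  by (simp add: trace_def sum_2)

lemma cayley_hamilton_2: "(A::real^2^2) ** A = trace A *\<^sub>R A - det A *\<^sub>R mat 1"
  by (simp add: vec_eq_iff forall_2 matrix_matrix_mult_2 trace_2 det_2 mat_def algebra_simps)

lemma matrix_inv_unique:
  fixes A B :: "'a::comm_ring_1^'n^'n"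
  assumes "A ** B = mat 1" "B ** A = mat 1"
  shows "matrix_inv A = B"
proof -
  have inv: "A ** matrix_inv A = mat 1 \<and> matrix_inv A ** A = mat 1"
    unfolding matrix_inv_def by (rule someI[of _ B]) (use assms in auto)
  then have "matrix_inv A = matrix_inv A ** (A ** B)" using assms by simp
  also have "\<dots> = B" using inv by (simp add: matrix_mul_assoc)
  finally show ?thesis .
qed

lemma matrix_inv_det_1:
  fixes A :: "real^2^2"
  assumes "det A = 1"
  shows "matrix_inv A = trace A *\<^sub>R mat 1 - A"
  using cayley_hamilton_2[of A] assms
  by (intro matrix_inv_unique) (auto simp: vec_eq_iff forall_2 matrix_matrix_mult_2 mat_def algebra_simps)

lemma det_matrix_inv_det_1:
  fixes A :: "real^2^2"
  assumes "det A = 1"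
  shows "det (matrix_inv A) = 1"
  using assms by (simp add: matrix_inv_det_1 det_2 trace_2 mat_def algebra_simps)

lemma trace_mult_recurrence:
  fixes A P :: "real^2^2"
  shows "trace (A ** (A ** P)) = trace A * trace (A ** P) - det A * trace P"
  by (simp add: trace_2 det_2 matrix_matrix_mult_2 algebra_simps)

lemma trace_matrix_power_ge:
  fixes A :: "real^2^2"
  assumes "det A = 1" "trace A > 2"
  shows "trace (((**) A ^^ n) (mat 1)) \<ge> 2 + n * (trace A - 2)"
proof -
  define t where "t n = trace (((**) A ^^ n) (mat 1))" for n
  have t_rec: "t (Suc (Suc n)) = trace A * t (Suc n) - t n" for n
    using trace_mult_recurrence[of A "((**) A ^^ n) (mat 1)"] assms(1) by (simp add: t_def)
  have "t n \<ge> 2 + n * (trace A - 2) \<and> t (Suc n) - t n \<ge> trace A - 2" for n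
  proof (induction n)
    case 0
    then show ?case by (simp add: t_def trace_I)
  next
    case (Suc n)
    from Suc.IH have IH: "t n \<ge> 2 + n * (trace A - 2)" "t (Suc n) - t n \<ge> trace A - 2"
      by auto
    have "real n * (trace A - 2) \<ge> 0" using assms(2) by simp
    then have "t (Suc n) \<ge> 0" using IH assms(2) by linarith
    then have "(trace A - 2) * t (Suc n) \<ge> 0" using assms(2) by simp
    then show ?case using Suc t_rec[of n] by (simp add: algebra_simps)
  qed
  then show ?thesis by (simp add: t_def)
qed

lemma abs_trace_le_norm: "\<bar>trace (A::real^'n^'n)\<bar> \<le> CARD('n) * norm A"
proof -
  have "\<bar>trace A\<bar> \<le> (\<Sum>i\<in>UNIV. \<bar>A$i$i\<bar>)" unfolding trace_def by (rule sum_abs)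
  also have "\<dots> \<le> (\<Sum>i\<in>(UNIV::'n set). norm A)"
    by (intro sum_mono order_trans[OF component_le_norm_cart Finite_Cartesian_Product.norm_nth_le])
  finally show ?thesis by simp
qed

lemma not_bounded_if_hyperbolic:
  fixes H :: "(real^2^2) set"
  assumes mult: "\<And>A B. A \<in> H \<Longrightarrow> B \<in> H \<Longrightarrow> A ** B \<in> H" and "mat 1 \<in> H"
    and "A \<in> H" "det A = 1" "trace A > 2"
  shows "\<not> bounded H"
proof
  assume "bounded H"
  then obtain b where b: "\<And>B. B \<in> H \<Longrightarrow> norm B \<le> b" unfolding bounded_iff by blast
  have "((**) A ^^ n) (mat 1) \<in> H" for n
    by (induction n) (simp_all add: mult \<open>mat 1 \<in> H\<close> \<open>A \<in> H\<close>)
  then have bound: "2 + real n * (trace A - 2) \<le> 2 * b" for n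
    using trace_matrix_power_ge[OF assms(4,5), of n] abs_trace_le_norm[of "((**) A ^^ n) (mat 1)"]
      b[of "((**) A ^^ n) (mat 1)"]
    by simp
  obtain n :: nat where "2 * b / (trace A - 2) < n" using reals_Archimedean2 by blast
  then have "2 * b < real n * (trace A - 2)" using assms(5) by (simp add: field_simps)
  with bound[of n] show False by linarith
qed

definition cross2 :: "real^2 \<Rightarrow> real^2 \<Rightarrow> real" where
  "cross2 a b = a$1 * b$2 - a$2 * b$1"

lemma proj_point_neq_if_cross2_neq_0:
  assumes "cross2 a b \<noteq> 0"
  shows "proj_point a \<noteq> proj_point b"
proof
  assume "proj_point a = proj_point b"
  then have "a \<in> span {b}" unfolding proj_point_def by (metis span_base singletonI)
  then obtain c where "a = c *\<^sub>R b" by (auto simp: span_singleton)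
  with assms show False by (simp add: cross2_def)
qed

lemma cross2_matrix_vector_mult: "cross2 (A *v a) (A *v b) = det A * cross2 a b"
  by (simp add: cross2_def matrix_vector_mult_2 det_2 algebra_simps)

lemma cross2_square_matrix_vector_mult: "cross2 x ((A ** A) *v x) = trace A * cross2 x (A *v x)"
  by (simp add: cayley_hamilton_2 cross2_def matrix_vector_mult_2 mat_def algebra_simps)

lemma three_lines_in_orbit:
  fixes H :: "(real^2^2) set"
  assumes mult: "\<And>A B. A \<in> H \<Longrightarrow> B \<in> H \<Longrightarrow> A ** B \<in> H" and "mat 1 \<in> H"
    and "A \<in> H" "det A \<noteq> 0" "trace A \<noteq> 0" "cross2 x (A *v x) \<noteq> 0"
  shows "\<exists>g1\<in>H. \<exists>g2\<in>H. \<exists>g3\<in>H.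
           proj_point (g1 *v x) \<noteq> proj_point (g2 *v x) \<and>
           proj_point (g1 *v x) \<noteq> proj_point (g3 *v x) \<and>
           proj_point (g2 *v x) \<noteq> proj_point (g3 *v x)"
proof -
  have "cross2 (A *v x) (A *v (A *v x)) \<noteq> 0"
    using assms(4,6) by (simp add: cross2_matrix_vector_mult)
  then have "proj_point (A *v x) \<noteq> proj_point ((A ** A) *v x)"
    by (simp add: proj_point_neq_if_cross2_neq_0 matrix_vector_mul_assoc)
  moreover have "proj_point (mat 1 *v x) \<noteq> proj_point ((A ** A) *v x)"
    using assms(5,6) by (simp add: proj_point_neq_if_cross2_neq_0 cross2_square_matrix_vector_mult)
  moreover have "proj_point (mat 1 *v x) \<noteq> proj_point (A *v x)"
    using assms(6) by (simp add: proj_point_neq_if_cross2_neq_0)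
  ultimately show ?thesis using assms(2,3) mult[OF assms(3,3)] by blast
qed

lemma closed_subgroup_generated_subset: "S \<subseteq> closed_subgroup_generated S"
  and mat_1_in_closed_subgroup_generated: "mat 1 \<in> closed_subgroup_generated S"
  and matrix_mult_in_closed_subgroup_generated:
    "A \<in> closed_subgroup_generated S \<Longrightarrow> B \<in> closed_subgroup_generated S
      \<Longrightarrow> A ** B \<in> closed_subgroup_generated S"
  and matrix_inv_in_closed_subgroup_generated:
    "A \<in> closed_subgroup_generated S \<Longrightarrow> matrix_inv A \<in> closed_subgroup_generated S"
  unfolding closed_subgroup_generated_def by blast+

lemma measure_support_distr:
  fixes M :: "'a::topological_space measure" and f :: "'a \<Rightarrow> 'b::topological_space"
  assumes "sets M = sets borel" "continuous_on UNIV f"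
  shows "f ` measure_support M \<subseteq> measure_support (distr M borel f)"
proof (clarsimp simp: measure_support_def)
  fix x and U :: "'b set"
  assume x: "\<forall>V. open V \<longrightarrow> x \<in> V \<longrightarrow> 0 < emeasure M V" and U: "open U" "f x \<in> U"
  have "f \<in> measurable M borel"
    using measurable_cong_sets[OF assms(1) refl] borel_measurable_continuous_onI[OF assms(2)]
    by blast
  then have "emeasure (distr M borel f) U = emeasure M (f -` U \<inter> space M)"
    using U by (simp add: emeasure_distr)
  also have "f -` U \<inter> space M = f -` U"
    using sets_eq_imp_space_eq[OF assms(1)] by simp
  also have "emeasure M (f -` U) > 0"
    using x U open_vimage[OF U(1) assms(2)] by simp
  finally show "emeasure (distr M borel f) U > 0" .
qed

lemma transfer_nth:
  "transfer E w $ 1 $ 1 = (w - E) * (w + E) + 1" "transfer E w $ 1 $ 2 = w - E"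
  "transfer E w $ 2 $ 1 = w + E" "transfer E w $ 2 $ 2 = 1"
  by (simp_all add: transfer_def)

lemma continuous_on_transfer: "continuous_on UNIV (transfer E)"
  unfolding transfer_def
proof (intro continuous_on_vec_lambda)
  fix i j :: 2
  show "continuous_on UNIV (\<lambda>w. if i = 1 \<and> j = 1 then (w - E) * (w + E) + 1
      else if i = 1 \<and> j = 2 then w - E else if i = 2 \<and> j = 1 then w + E else 1)"
    by (cases "i = 1 \<and> j = 1"; cases "i = 1 \<and> j = 2"; cases "i = 2 \<and> j = 1")
      (auto intro!: continuous_intros)
qed

lemma det_transfer: "det (transfer E w) = 1"
  by (simp add: det_2 transfer_nth algebra_simps)

definition transfer_quotient :: "real \<Rightarrow> real \<Rightarrow> real \<Rightarrow> real^2^2" where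
  "transfer_quotient E v w = matrix_inv (transfer E v) ** transfer E w"

lemma transfer_quotient_nth:
  "transfer_quotient E v w $ 1 $ 1 = (w - E) * (w + E) + 1 - (v - E) * (w + E)"
  "transfer_quotient E v w $ 1 $ 2 = w - v"
  "transfer_quotient E v w $ 2 $ 1 = (v - w) * (v * w + E * (v + w) + E\<^sup>2 - 1)"
  "transfer_quotient E v w $ 2 $ 2 = (v - E) * (v + E) + 1 - (v + E) * (w - E)"
  by (simp_all add: transfer_quotient_def matrix_inv_det_1 det_transfer matrix_matrix_mult_2
      trace_2 transfer_nth mat_def algebra_simps power2_eq_square)

lemma det_transfer_quotient: "det (transfer_quotient E v w) = 1"
  by (simp add: transfer_quotient_def det_mul det_matrix_inv_det_1 det_transfer)

lemma trace_transfer_quotient: "trace (transfer_quotient E v w) = 2 + (w - v)\<^sup>2"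
  by (simp add: trace_2 transfer_quotient_nth algebra_simps power2_eq_square)

lemma cross2_transfer_quotient:
  "cross2 x (transfer_quotient E v w *v x) =
     (v - w) * ((x$2 + (v + E) * x$1) * (x$2 + (w + E) * x$1) - (x$1)\<^sup>2)"
  by (simp add: cross2_def matrix_vector_mult_2 transfer_quotient_nth algebra_simps power2_eq_square)

lemma transfer_quotients_move_every_line:
  assumes "x \<noteq> 0" "u \<noteq> v" "v \<noteq> w" "u \<noteq> w"
  shows "cross2 x (transfer_quotient E u v *v x) \<noteq> 0 \<or> cross2 x (transfer_quotient E v w *v x) \<noteq> 0"
proof (rule ccontr)
  define p a where "p = x$1" and "a = x$2 + E * x$1"
  \<comment> \<open>In these coordinates the two invariant-line conditions differ by \<open>(u - w) p (a + v p)\<close>.\<close>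
  assume "\<not> ?thesis"
  moreover have "cross2 x (transfer_quotient E s t *v x) = (s - t) * ((a + s * p) * (a + t * p) - p\<^sup>2)"
    for s t by (simp add: cross2_transfer_quotient p_def a_def algebra_simps)
  ultimately have uv: "(a + u * p) * (a + v * p) = p\<^sup>2" and vw: "(a + v * p) * (a + w * p) = p\<^sup>2"
    using assms(2,3) by auto
  have "(u - w) * p * (a + v * p) = 0"
    using arg_cong2[OF uv vw, of "(-)"] by (simp add: algebra_simps)
  then have "p = 0 \<or> a + v * p = 0"
    using assms(4) by simp
  then have "p = 0 \<and> a = 0"
    using uv by (auto simp: power2_eq_square)
  then have "x = 0"
    by (auto simp: p_def a_def vec_eq_iff forall_2)
  with assms(1) show False ..
qed

lemma transfer_quotient_in_closed_subgroup_generated: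
  assumes "sets \<mu> = sets borel" "measure_support \<mu> = {0..1}" "v \<in> {0..1}" "w \<in> {0..1}"
  shows "transfer_quotient E v w
           \<in> closed_subgroup_generated (measure_support (distr \<mu> borel (transfer E)))"
proof -
  have "transfer E ` {0..1} \<subseteq> closed_subgroup_generated (measure_support (distr \<mu> borel (transfer E)))"
    using measure_support_distr[OF assms(1) continuous_on_transfer] assms(2)
      closed_subgroup_generated_subset by blast
  then show ?thesis
    using assms(3,4) unfolding transfer_quotient_def
    by (intro matrix_mult_in_closed_subgroup_generated matrix_inv_in_closed_subgroup_generated) auto
qed

theorem mainTheorem15:
  fixes \<mu> :: "real measure" and E :: real
  assumes "prob_space \<mu>"
    and "sets \<mu> = sets borel"
    and "measure_support \<mu> = {0..1}"
    and "E \<in> {-3..3}"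
  defines "G \<equiv> closed_subgroup_generated
                 (measure_support (distr \<mu> (borel :: (real^2^2) measure) (transfer E)))"
  shows "\<not> compact G \<and>
         (\<forall>x::real^2. x \<noteq> 0 \<longrightarrow>
            (\<exists>g1\<in>G. \<exists>g2\<in>G. \<exists>g3\<in>G.
               proj_point (g1 *v x) \<noteq> proj_point (g2 *v x) \<and>
               proj_point (g1 *v x) \<noteq> proj_point (g3 *v x) \<and>
               proj_point (g2 *v x) \<noteq> proj_point (g3 *v x)))"
proof -
  have Q_in_G: "transfer_quotient E v w \<in> G" if "v \<in> {0..1}" "w \<in> {0..1}" for v w
    using transfer_quotient_in_closed_subgroup_generated[OF assms(2,3) that] by (simp add: G_def)
  have G_mult: "A ** B \<in> G" if "A \<in> G" "B \<in> G" for A B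
    using that unfolding G_def by (rule matrix_mult_in_closed_subgroup_generated)
  have mat_1_G: "mat 1 \<in> G" by (simp add: G_def mat_1_in_closed_subgroup_generated)
  have "\<not> bounded G"
    using Q_in_G[of 0 1] det_transfer_quotient trace_transfer_quotient[of E 0 1]
    by (intro not_bounded_if_hyperbolic[OF G_mult mat_1_G]) auto
  moreover have "\<exists>g1\<in>G. \<exists>g2\<in>G. \<exists>g3\<in>G.
               proj_point (g1 *v x) \<noteq> proj_point (g2 *v x) \<and>
               proj_point (g1 *v x) \<noteq> proj_point (g3 *v x) \<and>
               proj_point (g2 *v x) \<noteq> proj_point (g3 *v x)" if "x \<noteq> 0" for x :: "real^2"
  proof -
    have "cross2 x (transfer_quotient E 0 (1/2) *v x) \<noteq> 0
        \<or> cross2 x (transfer_quotient E (1/2) 1 *v x) \<noteq> 0"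
      using transfer_quotients_move_every_line[OF \<open>x \<noteq> 0\<close>, of 0 "1/2" 1 E] by simp
    then obtain v w :: real where vw: "v \<in> {0..1}" "w \<in> {0..1}"
      and moved: "cross2 x (transfer_quotient E v w *v x) \<noteq> 0"
      by (elim disjE) (rule that; simp)+
    have "(w - v)\<^sup>2 \<ge> 0" by simp
    then have "trace (transfer_quotient E v w) \<noteq> 0"
      unfolding trace_transfer_quotient by linarith
    then show ?thesis
      using Q_in_G[OF vw(1,2)] det_transfer_quotient moved
      by (intro three_lines_in_orbit[OF G_mult mat_1_G]) auto
  qed
  ultimately show ?thesis using compact_imp_bounded by blast
qed

end
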